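(* Let $(Q,\mathbf z)$ be a model for a tropical Plücker vector $\pi_\bullet\in\mathrm{Dr}(k,n)$. Then for every $v\in V(Q)$ such that $M_v$ is nonempty, $M_v=M(\pi^{-\mathbf b_v}_\bullet)$, and in particular $M_v$ is a matroid.
   Context: $Q$ is a finite loopless directed graph with labeled vertices $\mathbf z=(z_1,\dots,z_n)\in V(Q)^n$; directed distance $\delta(v,w)$ is the minimal walk cost where an edge is traversed forwards at cost 1 and backwards at cost $k-1$ (assumed finite, with $\delta(v,w)=1,\delta(w,v)=k-1$ for each edge $v\to w$). $(Q,\mathbf z)$ is a model for $\pi_\bullet\in\mathbb R^{\binom{[n]}k}$ if $\pi_I=-\frac1k\min_{x\in V(Q)}\sum_{i\in I}\delta(x,z_i)$ for all $I$; $v$ is a distance minimizer for $I$ if it attains this minimum. $M_v=\{I\in\binom{[n]}k: v\text{ is a distance minimizer for }I\}$. $\mathbf b_v=\frac1k(\delta(v,z_1),\dots,\delta(v,z_n))$. $\mathrm{Dr}(k,n)$: vectors such that for all $S\in\binom{[n]}{k-2}$ and $a<b<c<d\notin S$, $\min(\pi_{Sab}+\pi_{Scd},\pi_{Sac}+\pi_{Sbd},\pi_{Sad}+\pi_{Sbc})$ is attained twice. $\pi^{\mathbf x}_I=\pi_I-\sum_{i\in I}x_i$ and $M(\pi^{\mathbf x}_\bullet)=\{I:\pi^{\mathbf x}_I=\min_J\pi^{\mathbf x}_J\}$. *)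

theory Defs
  imports Complex_Main
begin

inductive walk :: "('v \<Rightarrow> 'v \<Rightarrow> bool) \<Rightarrow> nat \<Rightarrow> 'v \<Rightarrow> 'v \<Rightarrow> nat \<Rightarrow> bool"
  for E :: "'v \<Rightarrow> 'v \<Rightarrow> bool" and k :: nat where
  walk_nil: "walk E k u u 0"
| walk_fwd: "E u x \<Longrightarrow> walk E k x w c \<Longrightarrow> walk E k u w (1 + c)"
| walk_bwd: "E x u \<Longrightarrow> walk E k x w c \<Longrightarrow> walk E k u w ((k - 1) + c)"

definition ddist :: "('v \<Rightarrow> 'v \<Rightarrow> bool) \<Rightarrow> nat \<Rightarrow> 'v \<Rightarrow> 'v \<Rightarrow> nat" where
  "ddist E k u w = (LEAST c. walk E k u w c)"

definition ksubsets :: "nat \<Rightarrow> nat \<Rightarrow> nat set set" where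
  "ksubsets k n = {I. I \<subseteq> {1..n} \<and> card I = k}"

definition min_attained_twice :: "real \<Rightarrow> real \<Rightarrow> real \<Rightarrow> bool" where
  "min_attained_twice x y z \<longleftrightarrow>
     (x = y \<and> x \<le> z) \<or> (x = z \<and> x \<le> y) \<or> (y = z \<and> y \<le> x)"

definition Dr :: "nat \<Rightarrow> nat \<Rightarrow> (nat set \<Rightarrow> real) set" where
  "Dr k n = {\<pi>. \<forall>S a b c d. S \<subseteq> {1..n} \<and> int (card S) + 2 = int k \<and>
       a \<in> {1..n} - S \<and> b \<in> {1..n} - S \<and> c \<in> {1..n} - S \<and> d \<in> {1..n} - S \<and>
       a < b \<and> b < c \<and> c < d \<longrightarrow>
       min_attained_twice (\<pi> (S \<union> {a,b}) + \<pi> (S \<union> {c,d}))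
                          (\<pi> (S \<union> {a,c}) + \<pi> (S \<union> {b,d}))
                          (\<pi> (S \<union> {a,d}) + \<pi> (S \<union> {b,c}))}"

definition dsum :: "('v \<Rightarrow> 'v \<Rightarrow> bool) \<Rightarrow> nat \<Rightarrow> (nat \<Rightarrow> 'v) \<Rightarrow> 'v \<Rightarrow> nat set \<Rightarrow> real" where
  "dsum E k z x I = (\<Sum>i\<in>I. real (ddist E k x (z i)))"

definition is_model :: "'v set \<Rightarrow> ('v \<Rightarrow> 'v \<Rightarrow> bool) \<Rightarrow> nat \<Rightarrow> nat \<Rightarrow> (nat \<Rightarrow> 'v)
    \<Rightarrow> (nat set \<Rightarrow> real) \<Rightarrow> bool" where
  "is_model V E k n z \<pi> \<longleftrightarrow>
     (\<forall>I\<in>ksubsets k n. \<pi> I = - (1 / real k) * Min ((\<lambda>x. dsum E k z x I) ` V))"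

definition Mv :: "'v set \<Rightarrow> ('v \<Rightarrow> 'v \<Rightarrow> bool) \<Rightarrow> nat \<Rightarrow> nat \<Rightarrow> (nat \<Rightarrow> 'v) \<Rightarrow> 'v \<Rightarrow> nat set set" where
  "Mv V E k n z v = {I \<in> ksubsets k n. dsum E k z v I = Min ((\<lambda>x. dsum E k z x I) ` V)}"

definition bvec :: "('v \<Rightarrow> 'v \<Rightarrow> bool) \<Rightarrow> nat \<Rightarrow> (nat \<Rightarrow> 'v) \<Rightarrow> 'v \<Rightarrow> nat \<Rightarrow> real" where
  "bvec E k z v i = real (ddist E k v (z i)) / real k"

definition shift :: "(nat set \<Rightarrow> real) \<Rightarrow> (nat \<Rightarrow> real) \<Rightarrow> nat set \<Rightarrow> real" where
  "shift \<pi> x I = \<pi> I - (\<Sum>i\<in>I. x i)"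

definition Mmin :: "nat \<Rightarrow> nat \<Rightarrow> (nat set \<Rightarrow> real) \<Rightarrow> nat set set" where
  "Mmin k n \<pi> = {I \<in> ksubsets k n. \<pi> I = Min (\<pi> ` ksubsets k n)}"

definition matroid_bases :: "'a set \<Rightarrow> 'a set set \<Rightarrow> bool" where
  "matroid_bases G \<B> \<longleftrightarrow> \<B> \<noteq> {} \<and> (\<forall>B\<in>\<B>. B \<subseteq> G) \<and>
     (\<forall>B1\<in>\<B>. \<forall>B2\<in>\<B>. \<forall>e\<in>B1 - B2. \<exists>f\<in>B2 - B1. insert f (B1 - {e}) \<in> \<B>)"

end

theory Submission
  imports Defs
begin

text \<open>Shifting by \<open>-b\<^sub>v\<close> turns \<open>\<pi>\<close> into \<open>I \<mapsto> (\<Sum>\<^sub>i\<^sub>\<in>\<^sub>I \<delta>(v,z\<^sub>i) - min\<^sub>x \<Sum>\<^sub>i\<^sub>\<in>\<^sub>I \<delta>(x,z\<^sub>i))/k\<close>,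
  which is nonnegative and vanishes exactly on \<open>M\<^sub>v\<close>; as \<open>M\<^sub>v \<noteq> {}\<close>, \<open>M\<^sub>v\<close> is its set of
  minimisers.

  Shifting by a linear function preserves the three-term Pluecker relations, and the minimisers
  of a tropical Pluecker vector form a matroid: the relations yield the symmetric exchange
  inequality \<open>\<pi>(B\<^sub>1 - e + f) + \<pi>(B\<^sub>2 - f + e) \<le> \<pi>(B\<^sub>1) + \<pi>(B\<^sub>2)\<close> by induction on \<open>|B\<^sub>1 - B\<^sub>2|\<close>,
  and when \<open>B\<^sub>1, B\<^sub>2\<close> are minimisers both exchanged sets must be minimisers as well.\<close>

lemma quadruple_by_sorting:
  fixes R :: "'a::linorder \<Rightarrow> 'a \<Rightarrow> 'a \<Rightarrow> 'a \<Rightarrow> bool"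
  assumes swap12: "\<And>a b c d. R a b c d \<Longrightarrow> R b a c d"
    and swap23: "\<And>a b c d. R a b c d \<Longrightarrow> R a c b d"
    and swap34: "\<And>a b c d. R a b c d \<Longrightarrow> R a b d c"
    and sorted: "\<And>a b c d. a < b \<Longrightarrow> b < c \<Longrightarrow> c < d \<Longrightarrow> R a b c d"
    and "distinct [a, b, c, d]"
  shows "R a b c d"
proof -
  have insert_first: "R a b c d" if ord: "b < c" "c < d" "a \<notin> {b, c, d}" for a b c d
  proof -
    consider "a < b" | "b < a" "a < c" | "c < a" "a < d" | "d < a"
      using ord by (auto simp: neq_iff)
    then show ?thesis
    proof cases
      case 1
      with ord show ?thesis by (metis sorted)
    next
      case 2
      with ord show ?thesis by (metis swap12 sorted)
    next
      case 3
      with ord show ?thesis by (metis swap12 swap23 sorted)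
    next
      case 4
      with ord show ?thesis by (metis swap12 swap23 swap34 sorted)
    qed
  qed
  have insert_second: "R a b c d" if ord: "c < d" "distinct [a, b, c, d]" for a b c d
  proof -
    consider "b < c" | "c < b" "b < d" | "d < b"
      using ord by (auto simp: neq_iff)
    then show ?thesis
    proof cases
      case 1
      then show ?thesis using ord by (intro insert_first) auto
    next
      case 2
      then have "R a c b d" using ord by (intro insert_first) auto
      then show ?thesis by (rule swap23)
    next
      case 3
      then have "R a c d b" using ord by (intro insert_first) auto
      then show ?thesis by (metis swap23 swap34)
    qed
  qed
  show ?thesis
  proof (cases "c < d")
    case True
    then show ?thesis using assms(5) by (rule insert_second)
  next
    case False
    then have "R a b d c" using assms(5) by (intro insert_second) (auto simp: neq_iff)
    then show ?thesis by (rule swap34)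
  qed
qed

lemma card_Diff_commute:
  assumes "finite A" "finite B" "card A = card B"
  shows "card (A - B) = card (B - A)"
  using assms by (simp add: card_Diff_subset_Int Int_commute)

lemma min_attained_twice_swap12: "min_attained_twice y x z = min_attained_twice x y z"
  and min_attained_twice_swap23: "min_attained_twice x z y = min_attained_twice x y z"
  by (auto simp: min_attained_twice_def)

lemma min_attained_twice_diff:
  "min_attained_twice (x - t) (y - t) (z - t) = min_attained_twice x y z"
  by (auto simp: min_attained_twice_def)

lemma finite_ksubsets: "finite (ksubsets k n)"
  unfolding ksubsets_def by (rule finite_subset[of _ "Pow {1..n}"]) auto

lemma ksubsets_ne_iff: "ksubsets k n \<noteq> {} \<longleftrightarrow> k \<le> n"
proof
  assume "ksubsets k n \<noteq> {}"
  then obtain I where "I \<subseteq> {1..n}" "card I = k"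
    unfolding ksubsets_def by blast
  then show "k \<le> n"
    using card_mono[of "{1..n}" I] by simp
next
  assume "k \<le> n"
  then have "{1..k} \<in> ksubsets k n"
    unfolding ksubsets_def by auto
  then show "ksubsets k n \<noteq> {}"
    by blast
qed

lemma ksubsets_exchange:
  assumes "B \<in> ksubsets k n" "x \<in> B" "y \<notin> B" "y \<in> {1..n}"
  shows "insert y (B - {x}) \<in> ksubsets k n"
proof -
  have "finite B"
    using assms(1) unfolding ksubsets_def by (auto intro: finite_subset)
  with assms have "card (insert y (B - {x})) = card B"
    by (metis card_Suc_Diff1 card_insert_disjoint finite_Diff Diff_iff)
  with assms show ?thesis
    unfolding ksubsets_def by auto
qed

lemma Dr_three_term_relation:
  assumes "\<pi> \<in> Dr k n" and "S \<subseteq> {1..n}" and "card S + 2 = k"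
    and "a \<in> {1..n} - S" "b \<in> {1..n} - S" "c \<in> {1..n} - S" "d \<in> {1..n} - S"
    and "distinct [a, b, c, d]"
  shows "min_attained_twice (\<pi> (S \<union> {a, b}) + \<pi> (S \<union> {c, d}))
                            (\<pi> (S \<union> {a, c}) + \<pi> (S \<union> {b, d}))
                            (\<pi> (S \<union> {a, d}) + \<pi> (S \<union> {b, c}))"
proof -
  let ?U = "{1..n} - S"
  define R where "R a b c d \<longleftrightarrow> a \<in> ?U \<longrightarrow> b \<in> ?U \<longrightarrow> c \<in> ?U \<longrightarrow> d \<in> ?U \<longrightarrow>
    min_attained_twice (\<pi> (S \<union> {a, b}) + \<pi> (S \<union> {c, d}))
                       (\<pi> (S \<union> {a, c}) + \<pi> (S \<union> {b, d}))
                       (\<pi> (S \<union> {a, d}) + \<pi> (S \<union> {b, c}))" for a b c d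
  have "R a b c d"
  proof (rule quadruple_by_sorting[where R = R])
    show "R b a c d" if "R a b c d" for a b c d
      using that min_attained_twice_swap23
      unfolding R_def by (simp add: insert_commute add.commute)
    show "R a c b d" if "R a b c d" for a b c d
      using that min_attained_twice_swap12
      unfolding R_def by (simp add: insert_commute add.commute)
    show "R a b d c" if "R a b c d" for a b c d
      using that min_attained_twice_swap23
      unfolding R_def by (simp add: insert_commute add.commute)
    show "R a b c d" if "a < b" "b < c" "c < d" for a b c d
      using assms(1-3) that unfolding R_def Dr_def by auto
  qed fact
  with assms(4-7) show ?thesis
    unfolding R_def by blast
qed

lemma shift_mem_Dr:
  assumes "\<pi> \<in> Dr k n"
  shows "shift \<pi> w \<in> Dr k n"
  unfolding Dr_def
proof (intro CollectI allI impI)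
  fix S a b c d
  assume H: "S \<subseteq> {1..n} \<and> int (card S) + 2 = int k \<and>
    a \<in> {1..n} - S \<and> b \<in> {1..n} - S \<and> c \<in> {1..n} - S \<and> d \<in> {1..n} - S \<and>
    a < b \<and> b < c \<and> c < d"
  have "finite S"
    using H finite_subset by blast
  let ?t = "2 * sum w S + w a + w b + w c + w d"
  have "min_attained_twice (\<pi> (S \<union> {a, b}) + \<pi> (S \<union> {c, d}) - ?t)
                           (\<pi> (S \<union> {a, c}) + \<pi> (S \<union> {b, d}) - ?t)
                           (\<pi> (S \<union> {a, d}) + \<pi> (S \<union> {b, c}) - ?t)"
    unfolding min_attained_twice_diff using assms H unfolding Dr_def by blast
  then show "min_attained_twice
      (shift \<pi> w (S \<union> {a, b}) + shift \<pi> w (S \<union> {c, d}))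
      (shift \<pi> w (S \<union> {a, c}) + shift \<pi> w (S \<union> {b, d}))
      (shift \<pi> w (S \<union> {a, d}) + shift \<pi> w (S \<union> {b, c}))"
    using H \<open>finite S\<close> unfolding shift_def by (simp add: algebra_simps)
qed

lemma Dr_exchange_inequality:
  assumes Dr: "\<pi> \<in> Dr k n" and B1: "B1 \<in> ksubsets k n" and B2: "B2 \<in> ksubsets k n"
    and e: "e \<in> B1 - B2"
  shows "\<exists>f\<in>B2 - B1. \<pi> (insert f (B1 - {e})) + \<pi> (insert e (B2 - {f})) \<le> \<pi> B1 + \<pi> B2"
  using B1 e
proof (induction "card (B1 - B2)" arbitrary: B1 rule: less_induct)
  case less
  have fin: "finite B1" "finite B2" and sub: "B1 \<subseteq> {1..n}" "B2 \<subseteq> {1..n}"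
    and card: "card B1 = k" "card B2 = k"
    using less.prems(1) B2 by (auto simp: ksubsets_def intro: finite_subset)
  have card_D: "card (B2 - B1) = card (B1 - B2)"
    using card_Diff_commute[OF fin] card by simp
  show ?case
  proof (cases "B1 - B2 = {e}")
    case True
    with card_D obtain f where "B2 - B1 = {f}"
      by (metis card_1_singletonE is_singletonI is_singleton_altdef)
    with True have "insert f (B1 - {e}) = B2" "insert e (B2 - {f}) = B1"
      by blast+
    with \<open>B2 - B1 = {f}\<close> show ?thesis
      by simp
  next
    case False
    with less.prems(2) obtain a where a: "a \<in> B1 - B2" "a \<noteq> e"
      by blast
    let ?D = "B2 - B1"
    have "?D \<noteq> {}"
      using card_D less.prems(2) fin by (metis card_gt_0_iff empty_iff finite_Diff)
    txt \<open>Choosing \<open>g0\<close> to minimise \<open>q\<close> makes the pairing \<open>{a,g}|{e,g0}\<close> no larger than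
      \<open>{a,g0}|{e,g}\<close>, so the three-term relation bounds \<open>{a,e}|{g0,g}\<close> from below by it; combined with the
      induction hypothesis for \<open>Y = B1 - a + g0\<close> this is the claim for \<open>f = g\<close>.\<close>
    define q where "q g = \<pi> (insert g (B1 - {a})) - \<pi> (insert g (B1 - {e}))" for g
    define g0 where "g0 = arg_min_on q ?D"
    have g0: "g0 \<in> ?D" and g0_min: "\<And>g. g \<in> ?D \<Longrightarrow> q g0 \<le> q g"
      using arg_min_if_finite(1) arg_min_least fin(2) \<open>?D \<noteq> {}\<close> unfolding g0_def
      by (metis finite_Diff)+
    define Y where "Y = insert g0 (B1 - {a})"
    have Y: "Y \<in> ksubsets k n"
      unfolding Y_def using g0 a sub by (intro ksubsets_exchange less.prems(1)) auto
    have "Y - B2 = B1 - B2 - {a}"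
      using g0 a unfolding Y_def by auto
    then have "card (Y - B2) < card (B1 - B2)"
      using a fin by (metis card_Diff1_less finite_Diff)
    moreover have "e \<in> Y - B2"
      using a less.prems(2) unfolding Y_def by auto
    ultimately obtain g where g: "g \<in> B2 - Y"
      and IH: "\<pi> (insert g (Y - {e})) + \<pi> (insert e (B2 - {g})) \<le> \<pi> Y + \<pi> B2"
      using less.hyps Y by blast
    have g_D: "g \<in> ?D" "g \<noteq> g0"
      using g a unfolding Y_def by auto
    define S where "S = B1 - {a, e}"
    have "card {a, e} \<le> card B1"
      using a less.prems(2) fin by (intro card_mono) auto
    then have "card S + 2 = k"
      using a less.prems(2) fin card unfolding S_def by (simp add: card_Diff_subset)
    then have "min_attained_twice (\<pi> (S \<union> {a, e}) + \<pi> (S \<union> {g0, g}))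
                                  (\<pi> (S \<union> {a, g0}) + \<pi> (S \<union> {e, g}))
                                  (\<pi> (S \<union> {a, g}) + \<pi> (S \<union> {e, g0}))"
      using a less.prems(2) g0 g_D sub unfolding S_def
      by (intro Dr_three_term_relation[OF Dr]) auto
    moreover have "S \<union> {a, e} = B1" "S \<union> {g0, g} = insert g (Y - {e})"
      "S \<union> {a, g0} = insert g0 (B1 - {e})" "S \<union> {e, g} = insert g (B1 - {a})"
      "S \<union> {a, g} = insert g (B1 - {e})" "S \<union> {e, g0} = Y"
      using a less.prems(2) g0 g_D unfolding S_def Y_def by auto
    moreover have "q g0 \<le> q g"
      using g0_min g_D by blast
    ultimately have "\<pi> (insert g (B1 - {e})) + \<pi> Y \<le> \<pi> B1 + \<pi> (insert g (Y - {e}))"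
      unfolding min_attained_twice_def q_def Y_def by auto
    with IH g_D show ?thesis
      by force
  qed
qed

lemma matroid_bases_Mmin:
  assumes Dr: "\<pi> \<in> Dr k n" and "k \<le> n"
  shows "matroid_bases {1..n} (Mmin k n \<pi>)"
  unfolding matroid_bases_def
proof (intro conjI ballI)
  let ?K = "ksubsets k n"
  let ?m = "Min (\<pi> ` ?K)"
  have Min_le_\<pi>: "?m \<le> \<pi> I" if "I \<in> ?K" for I
    using finite_ksubsets that by simp
  have "?m \<in> \<pi> ` ?K"
    using finite_ksubsets \<open>k \<le> n\<close> ksubsets_ne_iff by (intro Min_in) auto
  then show "Mmin k n \<pi> \<noteq> {}"
    unfolding Mmin_def by force
  show "B \<subseteq> {1..n}" if "B \<in> Mmin k n \<pi>" for B
    using that unfolding Mmin_def ksubsets_def by blast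
  fix B1 B2 e
  assume B1: "B1 \<in> Mmin k n \<pi>" and B2: "B2 \<in> Mmin k n \<pi>" and e: "e \<in> B1 - B2"
  then have K: "B1 \<in> ?K" "B2 \<in> ?K" and min: "\<pi> B1 = ?m" "\<pi> B2 = ?m"
    unfolding Mmin_def by auto
  obtain f where f: "f \<in> B2 - B1"
    and exchange: "\<pi> (insert f (B1 - {e})) + \<pi> (insert e (B2 - {f})) \<le> \<pi> B1 + \<pi> B2"
    using Dr_exchange_inequality[OF Dr K e] by blast
  have "f \<in> {1..n}" "e \<in> {1..n}"
    using K e f unfolding ksubsets_def by auto
  with K e f have B1': "insert f (B1 - {e}) \<in> ?K" and B2': "insert e (B2 - {f}) \<in> ?K"
    by (auto intro: ksubsets_exchange)
  have "\<pi> (insert f (B1 - {e})) = ?m"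
    using exchange min Min_le_\<pi>[OF B1'] Min_le_\<pi>[OF B2'] by linarith
  with B1' f show "\<exists>f\<in>B2 - B1. insert f (B1 - {e}) \<in> Mmin k n \<pi>"
    unfolding Mmin_def by blast
qed

lemma shift_neg_bvec:
  assumes "is_model V E k n z \<pi>" and "I \<in> ksubsets k n"
  shows "shift \<pi> (\<lambda>i. - bvec E k z v i) I
    = (dsum E k z v I - Min ((\<lambda>x. dsum E k z x I) ` V)) / real k"
proof -
  have "(\<Sum>i\<in>I. - bvec E k z v i) = - (dsum E k z v I / real k)"
    unfolding bvec_def dsum_def by (simp add: sum_negf sum_divide_distrib)
  with assms show ?thesis
    unfolding is_model_def shift_def by (simp add: diff_divide_distrib)
qed

lemma Mv_eq_Mmin_shift:
  assumes "finite V" and "v \<in> V" and "1 \<le> k" and model: "is_model V E k n z \<pi>"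
    and "Mv V E k n z v \<noteq> {}"
  shows "Mv V E k n z v = Mmin k n (shift \<pi> (\<lambda>i. - bvec E k z v i))"
proof -
  let ?K = "ksubsets k n"
  let ?s = "shift \<pi> (\<lambda>i. - bvec E k z v i)"
  have "Min ((\<lambda>x. dsum E k z x I) ` V) \<le> dsum E k z v I" for I
    using assms(1,2) by (intro Min_le) auto
  then have s_nonneg: "0 \<le> ?s I" and s_eq_0_iff: "?s I = 0 \<longleftrightarrow> I \<in> Mv V E k n z v"
    if "I \<in> ?K" for I
    using that assms(3) shift_neg_bvec[OF model that] unfolding Mv_def by auto
  have "Min (?s ` ?K) = 0"
  proof (rule Min_eqI)
    show "finite (?s ` ?K)"
      using finite_ksubsets by blast
    show "0 \<le> y" if "y \<in> ?s ` ?K" for y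
      using that s_nonneg by blast
    show "0 \<in> ?s ` ?K"
      using assms(5) s_eq_0_iff unfolding Mv_def by force
  qed
  with s_eq_0_iff show ?thesis
    unfolding Mmin_def Mv_def by auto
qed

theorem proposition3p9:
  fixes V :: "'v set" and E :: "'v \<Rightarrow> 'v \<Rightarrow> bool" and k n :: nat
    and z :: "nat \<Rightarrow> 'v" and \<pi> :: "nat set \<Rightarrow> real" and v :: 'v
  assumes finV: "finite V"
    and E_in_V: "\<And>a b. E a b \<Longrightarrow> a \<in> V \<and> b \<in> V"
    and loopless: "\<And>a. \<not> E a a"
    and k_pos: "1 \<le> k"
    and dist_finite: "\<And>a b. a \<in> V \<Longrightarrow> b \<in> V \<Longrightarrow> \<exists>c. walk E k a b c"
    and edge_dist: "\<And>a b. E a b \<Longrightarrow> ddist E k a b = 1 \<and> ddist E k b a = k - 1"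
    and z_in_V: "\<And>i. i \<in> {1..n} \<Longrightarrow> z i \<in> V"
    and Dr: "\<pi> \<in> Dr k n"
    and model: "is_model V E k n z \<pi>"
    and vV: "v \<in> V"
    and Mv_ne: "Mv V E k n z v \<noteq> {}"
  shows "Mv V E k n z v = Mmin k n (shift \<pi> (\<lambda>i. - bvec E k z v i))
         \<and> matroid_bases {1..n} (Mv V E k n z v)"
proof
  show Mv_eq: "Mv V E k n z v = Mmin k n (shift \<pi> (\<lambda>i. - bvec E k z v i))"
    using Mv_eq_Mmin_shift[OF finV vV k_pos model Mv_ne] .
  have "k \<le> n"
    using Mv_ne ksubsets_ne_iff unfolding Mv_def by blast
  with Dr show "matroid_bases {1..n} (Mv V E k n z v)"
    unfolding Mv_eq by (intro matroid_bases_Mmin shift_mem_Dr)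
qed

end
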